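(* Let $K$ be a field, $A=\{\alpha_1,\dots,\alpha_m\}\subset K$ and $B=\{\beta_1,\dots,\beta_n\}\subset K$ finite sets with $|A|=m$, $|B|=n$, and $f=\prod_{i=1}^m(x-\alpha_i)$. Let $0\le d\le n-1$ and suppose $m\le d$. Then $$\operatorname{Syl}_{0,d}(A,B)=\begin{cases}0 & \text{if } m<d<n-1,\\ (-1)^{(m-d)(n-d)}\,f & \text{if } m<d=n-1 \text{ or } m=d\le n-1.\end{cases}$$
   Context: For finite sets $Y,Z$ of elements or indeterminates, $\mathcal{R}(Y,Z):=\prod_{y\in Y,z\in Z}(y-z)$, with $\mathcal{R}(Y,Z)=1$ if $Y$ or $Z$ is empty; for a single variable $x$, $\mathcal{R}(x,Z):=\mathcal{R}(\{x\},Z)$. For $0\le p\le m$, $0\le q\le n$, Sylvester's double sum is the polynomial in $x$ $$\operatorname{Syl}_{p,q}(A,B)(x):=\sum_{\substack{A'\subset A,\ B'\subset B\\ |A'|=p,\ |B'|=q}}\mathcal{R}(A',B')\,\mathcal{R}(A\setminus A',B\setminus B')\,\frac{\mathcal{R}(x,A')\,\mathcal{R}(x,B')}{\mathcal{R}(A',A\setminus A')\,\mathcal{R}(B',B\setminus B')}.$$ *)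

theory Defs
  imports "HOL-Computational_Algebra.Polynomial"
begin

definition Res :: "'a::comm_ring_1 set \<Rightarrow> 'a set \<Rightarrow> 'a" where
  "Res Y Z = (\<Prod>y\<in>Y. \<Prod>z\<in>Z. (y - z))"

definition Resx :: "'a::comm_ring_1 set \<Rightarrow> 'a poly" where
  "Resx Z = (\<Prod>z\<in>Z. [:- z, 1:])"

definition Syl :: "nat \<Rightarrow> nat \<Rightarrow> 'a::field set \<Rightarrow> 'a set \<Rightarrow> 'a poly" where
  "Syl p q A B =
     (\<Sum>A'\<in>{A'. A' \<subseteq> A \<and> card A' = p}. \<Sum>B'\<in>{B'. B' \<subseteq> B \<and> card B' = q}.
        smult (Res A' B' * Res (A - A') (B - B') / (Res A' (A - A') * Res B' (B - B')))
              (Resx A' * Resx B'))"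

end

theory Submission
  imports Defs
begin

text \<open>
  For \<open>A' = {}\<close> the double sum collapses to
  \<open>S\<^sub>d(A,B) := Syl\<^sub>0\<^sub>,\<^sub>d(A,B) = \<Sum>\<^bsub>B' \<subseteq> B, |B'| = d\<^esub> R(A, B - B') / R(B', B - B') \<cdot> R(x, B')\<close>,
  a polynomial of degree at most \<open>d\<close>. Evaluating at \<open>b \<in> B\<close> kills every term with
  \<open>b \<in> B'\<close>, and the surviving terms give \<open>(-1)\<^sup>d f(b)\<close> times the leading coefficient of
  \<open>S\<^sub>d(A, B - {b})\<close>. If \<open>|B| > d\<close> and these leading coefficients all equal \<open>k\<close>, then
  \<open>S\<^sub>d(A,B)\<close> and \<open>(-1)\<^bsup>m+d\<^esup> k f\<close> agree at \<open>|B|\<close> points and have degree \<open>< |B|\<close>, hence coincide.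
  Induction on \<open>|B| - d\<close> yields \<open>S\<^sub>d(A,B) = \<sigma> (\<sigma> c)\<^sup>j f\<close> for \<open>|B| = d + 1 + j\<close>,
  where \<open>\<sigma> = (-1)\<^bsup>m+d\<^esup>\<close> and \<open>c\<close> is the coefficient of \<open>x\<^sup>d\<close> in \<open>f\<close>; this is \<open>0\<close> for
  \<open>m < d\<close>, \<open>1\<close> for \<open>m = d\<close>.
\<close>

lemma degree_Resx: "finite S \<Longrightarrow> degree (Resx S :: 'a::field poly) = card S"
  unfolding Resx_def by (subst degree_prod_eq_sum_degree) auto

lemma lead_coeff_Resx: "lead_coeff (Resx S :: 'a::field poly) = 1"
  unfolding Resx_def by (simp add: lead_coeff_prod)

lemma coeff_Resx_card: "finite S \<Longrightarrow> coeff (Resx S :: 'a::field poly) (card S) = 1"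
  using lead_coeff_Resx[of S] degree_Resx[of S] by simp

lemma poly_Resx: "poly (Resx S) x = (\<Prod>z\<in>S. x - z)"
  unfolding Resx_def by (simp add: poly_prod)

lemma Res_insert_right:
  "finite X \<Longrightarrow> b \<notin> X \<Longrightarrow> Res Y (insert b X) = (\<Prod>y\<in>Y. y - b) * Res Y X"
  unfolding Res_def by (simp add: prod.distrib)

lemma Res_neq_0_if_disjoint:
  "finite Y \<Longrightarrow> finite X \<Longrightarrow> Y \<inter> X = {} \<Longrightarrow> Res Y X \<noteq> (0::'a::idom)"
  unfolding Res_def by (auto simp: prod_zero_iff)

lemma Syl_0_eq:
  assumes "finite A"
  shows "Syl 0 d A B = (\<Sum>B'\<in>{B'. B' \<subseteq> B \<and> card B' = d}.
           smult (Res A (B - B') / Res B' (B - B')) (Resx B'))"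
proof -
  have "{A'. A' \<subseteq> A \<and> card A' = 0} = {{}}"
    using assms by (auto dest: rev_finite_subset simp: card_0_eq)
  then show ?thesis unfolding Syl_def by (simp add: Res_def Resx_def)
qed

lemma degree_Syl_0_le: "finite A \<Longrightarrow> finite B \<Longrightarrow> degree (Syl 0 d A B) \<le> d"
  unfolding Syl_0_eq
  by (intro degree_sum_le)
     (auto intro: order.trans[OF degree_smult_le] simp: degree_Resx dest: rev_finite_subset)

lemma coeff_Syl_0:
  "finite A \<Longrightarrow> finite B \<Longrightarrow> coeff (Syl 0 d A B) d =
     (\<Sum>B'\<in>{B'. B' \<subseteq> B \<and> card B' = d}. Res A (B - B') / Res B' (B - B'))"
  unfolding Syl_0_eq coeff_sum
  by (intro sum.cong refl) (auto simp: coeff_Resx_card dest: rev_finite_subset)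

lemma coeff_Syl_0_card_eq:
  assumes "finite A" "finite B" "card B = d"
  shows "coeff (Syl 0 d A B) d = 1"
proof -
  have "{B'. B' \<subseteq> B \<and> card B' = d} = {B}"
    using assms by auto (metis card_subset_eq)
  then show ?thesis using assms by (simp add: coeff_Syl_0 Res_def)
qed

lemma poly_Syl_0_member:
  assumes fA: "finite A" and fB: "finite B" and b: "b \<in> B"
  shows "poly (Syl 0 d A B) b = (-1)^(card A + d) * poly (Resx A) b * coeff (Syl 0 d A (B - {b})) d"
proof -
  let ?S = "{B'. B' \<subseteq> B \<and> card B' = d}"
  let ?S' = "{B'. B' \<subseteq> B - {b} \<and> card B' = d}"
  let ?c = "\<lambda>B'. Res A (B - B') / Res B' (B - B')"
  have "poly (Syl 0 d A B) b = (\<Sum>B'\<in>?S. ?c B' * (\<Prod>z\<in>B'. b - z))"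
    unfolding Syl_0_eq[OF fA] by (simp add: poly_sum poly_Resx)
  also have "\<dots> = (\<Sum>B'\<in>?S'. ?c B' * (\<Prod>z\<in>B'. b - z))"
  proof (rule sum.mono_neutral_right)
    show "\<forall>B'\<in>?S - ?S'. ?c B' * (\<Prod>z\<in>B'. b - z) = 0"
      using fB by (auto simp: prod_zero_iff dest: rev_finite_subset)
  qed (use fB in auto)
  also have "\<dots> = (\<Sum>B'\<in>?S'. (-1)^(card A + d) * poly (Resx A) b *
                     (Res A (B - {b} - B') / Res B' (B - {b} - B')))"
  proof (rule sum.cong[OF refl])
    fix B' assume B': "B' \<in> ?S'"
    define X where "X = B - {b} - B'"
    have fX: "finite X" and bX: "b \<notin> X" using fB by (auto simp: X_def)
    have fB': "finite B'" using B' fB by (auto dest: rev_finite_subset)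
    have BB': "B - B' = insert b X" using B' b by (auto simp: X_def)
    have "Res B' X \<noteq> 0" using fX fB' by (intro Res_neq_0_if_disjoint) (auto simp: X_def)
    moreover have "(\<Prod>y\<in>B'. y - b) \<noteq> 0" using fB' B' by (auto simp: prod_zero_iff)
    moreover have "(\<Prod>z\<in>B'. b - z) = (-1)^d * (\<Prod>y\<in>B'. y - b)"
      using B' by (subst prod_diff_swap) auto
    moreover have "(\<Prod>a\<in>A. a - b) = (-1)^card A * poly (Resx A) b"
      by (subst prod_diff_swap) (simp add: poly_Resx)
    ultimately show "?c B' * (\<Prod>z\<in>B'. b - z) = (-1)^(card A + d) * poly (Resx A) b *
                       (Res A (B - {b} - B') / Res B' (B - {b} - B'))"
      unfolding BB' X_def[symmetric] Res_insert_right[OF fX bX]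
      by (simp add: field_simps power_add)
  qed
  also have "\<dots> = (-1)^(card A + d) * poly (Resx A) b * coeff (Syl 0 d A (B - {b})) d"
    using fA fB by (simp add: coeff_Syl_0 sum_distrib_left)
  finally show ?thesis .
qed

lemma Syl_0_eq_smult_Resx:
  assumes fA: "finite A" and fB: "finite B" and "card A \<le> d" "d < card B"
    and k: "\<And>b. b \<in> B \<Longrightarrow> coeff (Syl 0 d A (B - {b})) d = k"
  shows "Syl 0 d A B = smult ((-1)^(card A + d) * k) (Resx A)"
proof (rule poly_eqI_degree)
  show "poly (Syl 0 d A B) b = poly (smult ((-1)^(card A + d) * k) (Resx A)) b" if "b \<in> B" for b
    using poly_Syl_0_member[OF fA fB that, of d] k[OF that] by simp
  show "degree (Syl 0 d A B) < card B"
    using degree_Syl_0_le[OF fA fB, of d] assms by simp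
  show "degree (smult ((-1)^(card A + d) * k) (Resx A)) < card B"
    using degree_smult_le degree_Resx[OF fA] assms by (metis le_less_trans)
qed

lemma Syl_0_closed_form:
  fixes A B :: "'a::field set"
  assumes fA: "finite A" and "card A \<le> d" and "finite B" and "card B = d + 1 + j"
  defines "\<sigma> \<equiv> (-1)^(card A + d) :: 'a"
  shows "Syl 0 d A B = smult (\<sigma> * (\<sigma> * coeff (Resx A) d)^j) (Resx A)"
  using assms(3,4)
proof (induction j arbitrary: B)
  case 0
  have "Syl 0 d A B = smult (\<sigma> * 1) (Resx A)"
    using 0 assms(2) unfolding \<sigma>_def
    by (intro Syl_0_eq_smult_Resx coeff_Syl_0_card_eq fA) auto
  then show ?case by simp
next
  case (Suc j)
  have "Syl 0 d A B = smult (\<sigma> * (\<sigma> * (\<sigma> * coeff (Resx A) d)^j * coeff (Resx A) d)) (Resx A)"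
    using Suc assms(2) unfolding \<sigma>_def
    by (intro Syl_0_eq_smult_Resx fA) (auto simp: Suc.IH[unfolded \<sigma>_def])
  then show ?case by (simp add: mult_ac)
qed

lemma neg_one_power_int_diff: "(-1::'a::field) powi (int a - int b) = (-1)^(a + b)"
  by (cases "even b") (simp_all add: power_int_diff power_int_of_nat power_add)

theorem corollary2p6:
  fixes A B :: "'a::field set" and m n d :: nat
  assumes "finite A" and "finite B"
    and "card A = m" and "card B = n"
    and "d \<le> n - 1" and "d < n"
    and "m \<le> d"
  shows "(m < d \<and> d < n - 1 \<longrightarrow> Syl 0 d A B = 0)
       \<and> ((m < d \<and> d = n - 1) \<or> (m = d \<and> d \<le> n - 1) \<longrightarrow>
            Syl 0 d A B = smult ((-1) powi ((int m - int d) * (int n - int d))) (Resx A))"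
proof -
  define j where "j = n - d - 1"
  have closed: "Syl 0 d A B = smult ((-1)^(m + d) * ((-1)^(m + d) * coeff (Resx A) d)^j) (Resx A)"
    using Syl_0_closed_form[OF assms(1) _ assms(2), of d j] assms by (simp add: j_def)
  have "Syl 0 d A B = 0" if "m < d" "d < n - 1"
  proof -
    have "coeff (Resx A) d = 0"
      using that degree_Resx[OF assms(1)] assms(3) by (intro coeff_eq_0) simp
    moreover have "0 < j"
      using that by (simp add: j_def)
    then obtain i where "j = Suc i"
      using gr0_implies_Suc by blast
    ultimately show ?thesis using closed by simp
  qed
  moreover have "Syl 0 d A B = smult ((-1) powi ((int m - int d) * (int n - int d))) (Resx A)"
    if "d = n - 1"
  proof -
    have "j = 0" and "int n - int d = 1"
      using that assms(6) by (auto simp: j_def)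
    then show ?thesis using closed by (simp add: neg_one_power_int_diff)
  qed
  moreover have "Syl 0 d A B = Resx A" if "m = d"
    using closed that coeff_Resx_card[OF assms(1)] assms(3) by (simp flip: mult_2)
  ultimately show ?thesis by auto
qed

end
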